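(* Let $Y$ be a CARMA$(p,q)$ process with $\Re(\lambda_j)<0$ for all $j$, suppose $\Re(\mu_j)\neq0$ for all $j=1,\dots,q$, and fix $t\in(0,\infty)$. For $\Delta>0$, $n\in\mathbb N$ and $\omega\in\mathbb R$ define $$h^{\Delta,1}(\omega)=\sigma\frac{\sqrt\Delta}{\sigma_\Delta}\frac{\prod_{j=1}^p(1-e^{\Delta(\lambda_j+i\omega)})}{\Theta_\Delta(e^{i\omega\Delta})}\frac{b(-i\omega)}{a(-i\omega)},\quad h^{\Delta,2}(\omega)=\frac{e^{i\omega\Delta}-1}{i\omega},\quad h^{\Delta,3}_n(\omega)=\frac{1-e^{i\omega\Delta n}}{1-e^{i\omega\Delta}}$$ (extended by continuity where the denominators vanish). Then there is a constant $C>0$ such that for all $\omega\in\mathbb R$ and all sufficiently small $\Delta>0$, $$\Big|2\Re\Big(h^{\Delta,1}h^{\Delta,3}_{\lfloor t/\Delta\rfloor}(\omega)\cdot\overline{h^{\Delta,2}h^{\Delta,3}_{\lfloor t/\Delta\rfloor}(\omega)}\Big)\Big|\le h(\omega),$$ where $h(\omega):=\big(7^{2p}/2^{2p+q}+1\big)t^2\mathbf 1_{(-1,1)}(\omega)+C\omega^{-2}\mathbf 1_{\mathbb R\setminus(-1,1)}(\omega)$. Moreover, $h$ is integrable over $\mathbb R$.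
   Context: CARMA setting: integers $p>q\ge0$, $\sigma>0$, $a(z)=z^p+a_1z^{p-1}+\dots+a_p=\prod_{i=1}^p(z-\lambda_i)$ and $b(z)=\prod_{i=1}^q(z+\mu_i)$ real polynomials without common zeroes, $\Re(\lambda_i)<0$; $Y_t=\int g(t-u)dL_u$ for a two-sided Lévy process $L$ with $\mathbb{E}L_1=0$, $\mathbb{E}L_1^2=1$ and kernel $g$ with $\int g(s)e^{i\omega s}ds=\sigma b(-i\omega)/a(-i\omega)$, $g=0$ on $(-\infty,0]$. For $\Delta>0$, $Y^\Delta_n=Y_{n\Delta}$ satisfies $\Phi_\Delta(B)Y^\Delta_n=\Theta_\Delta(B)Z^\Delta_n$ with $\Phi_\Delta(z)=\prod_{i=1}^p(1-e^{\Delta\lambda_i}z)$, $B$ the backshift, $Z^\Delta$ white noise of variance $\sigma_\Delta^2$, and $\Theta_\Delta$ the minimum-phase spectral factor (degree $p-1$, $\Theta_\Delta(0)=1$, no zeroes inside the unit circle). Known asymptotics as $\Delta\downarrow0$: $\Theta_\Delta(z)=\prod_{i=1}^{p-q-1}(1+\eta_iz)\prod_{k=1}^q(1-\zeta_kz)$ with $\zeta_k=1-\operatorname{sgn}(\Re\mu_k)\mu_k\Delta+o(\Delta)$, $\eta_i=\xi_i-1-\sqrt{(\xi_i-1)^2-1}+o(1)$, $\xi_i$ the zeroes of $\alpha_{p-q-1}$ (where $\sinh(z)/(\cosh(z)-1+x)=\sum_k\alpha_k(x)z^{2k+1}$), and $\sigma_\Delta^2=\sigma^2\Delta^{2(p-q)-1}/\big((2(p-q)-1)!\prod_i\eta_i\big)(1+o(1))$.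 *)

theory Defs
  imports "HOL-Analysis.Analysis" "HOL-Computational_Algebra.Polynomial"
begin

text \<open>Spectral density of the CARMA process Y with kernel Fourier transform
  sigma b(-i w)/a(-i w) driven by a Levy process with unit variance.\<close>
definition carma_spec_dens :: "real \<Rightarrow> real poly \<Rightarrow> real poly \<Rightarrow> real \<Rightarrow> real" where
  "carma_spec_dens \<sigma> a b \<omega> =
     \<sigma>^2 / (2*pi) * (cmod (poly (map_poly of_real b) (- \<i> * of_real \<omega>)))^2
       / (cmod (poly (map_poly of_real a) (- \<i> * of_real \<omega>)))^2"

definition sampled_spec_dens :: "real \<Rightarrow> real poly \<Rightarrow> real poly \<Rightarrow> real \<Rightarrow> real \<Rightarrow> real" where
  "sampled_spec_dens \<sigma> a b \<Delta> \<theta> =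
     (1/\<Delta>) * (\<Sum>\<^sub>\<infinity>k::int. carma_spec_dens \<sigma> a b ((\<theta> + 2 * pi * of_int k)/\<Delta>))"

definition Phi_poly :: "(nat \<Rightarrow> complex) \<Rightarrow> nat \<Rightarrow> real \<Rightarrow> complex poly" where
  "Phi_poly lam p \<Delta> = (\<Prod>i<p. [:1, - exp (of_real \<Delta> * lam i):])"

text \<open>Theta is the minimum-phase spectral factor (Theta(0)=1, degree at most p-1,
  no zeroes inside the unit circle) and sD^2 the white-noise variance of the
  ARMA representation Phi_Delta(B) Y^Delta = Theta(B) Z^Delta of the sampled
  process, expressed through equality of spectral densities.\<close>
definition min_phase_factor ::
  "real \<Rightarrow> real poly \<Rightarrow> real poly \<Rightarrow> (nat \<Rightarrow> complex) \<Rightarrow> nat \<Rightarrow> real \<Rightarrow> complex poly \<Rightarrow> real \<Rightarrow> bool" where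
  "min_phase_factor \<sigma> a b lam p \<Delta> \<Theta> sD \<longleftrightarrow>
     sD > 0 \<and> degree \<Theta> \<le> p - 1 \<and> poly \<Theta> 0 = 1 \<and>
     (\<forall>z. poly \<Theta> z = 0 \<longrightarrow> 1 \<le> cmod z) \<and>
     (\<forall>\<theta>::real. sD^2 / (2*pi) * (cmod (poly \<Theta> (exp (- \<i> * of_real \<theta>))))^2
          / (cmod (poly (Phi_poly lam p \<Delta>) (exp (- \<i> * of_real \<theta>))))^2
        = sampled_spec_dens \<sigma> a b \<Delta> \<theta>)"

definition hD1 ::
  "real \<Rightarrow> real poly \<Rightarrow> real poly \<Rightarrow> (nat \<Rightarrow> complex) \<Rightarrow> nat \<Rightarrow> real \<Rightarrow> complex poly \<Rightarrow> real \<Rightarrow> real \<Rightarrow> complex" where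
  "hD1 \<sigma> a b lam p \<Delta> \<Theta> sD \<omega> =
     of_real (\<sigma> * sqrt \<Delta> / sD)
     * (\<Prod>j<p. 1 - exp (of_real \<Delta> * (lam j + \<i> * of_real \<omega>)))
     / poly \<Theta> (exp (\<i> * of_real \<omega> * of_real \<Delta>))
     * poly (map_poly of_real b) (- \<i> * of_real \<omega>)
     / poly (map_poly of_real a) (- \<i> * of_real \<omega>)"

definition hD2 :: "real \<Rightarrow> real \<Rightarrow> complex" where
  "hD2 \<Delta> \<omega> = (if \<omega> = 0 then of_real \<Delta>
     else (exp (\<i> * of_real \<omega> * of_real \<Delta>) - 1) / (\<i> * of_real \<omega>))"

definition hD3 :: "real \<Rightarrow> nat \<Rightarrow> real \<Rightarrow> complex" where
  "hD3 \<Delta> n \<omega> = (if exp (\<i> * of_real \<omega> * of_real \<Delta>) = 1 then of_nat n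
     else (1 - exp (\<i> * of_real \<omega> * of_real \<Delta> * of_nat n)) / (1 - exp (\<i> * of_real \<omega> * of_real \<Delta>)))"

definition carma_bound :: "nat \<Rightarrow> nat \<Rightarrow> real \<Rightarrow> real \<Rightarrow> real \<Rightarrow> real" where
  "carma_bound p q t C \<omega> =
     (7^(2*p) / 2^(2*p+q) + 1) * t^2 * indicator {-1<..<1} \<omega>
     + C * \<omega> powi (-2) * indicator (- {-1<..<1}) \<omega>"

end

theory Submission
  imports Defs
begin

text \<open>Write \<open>g = |b(-i\<omega>)/a(-i\<omega>)|\<close>. The spectral identity of the minimum-phase factorisation
  says that \<open>sD\<^sup>2 |\<Theta>|\<^sup>2 / |\<Phi>|\<^sup>2\<close> is the aliasing sum of the CARMA spectral density; keeping a
  single aliased term gives \<open>|hD1(\<omega>)| g(w) \<le> \<Delta> g(\<omega>)\<close> for every \<open>w \<equiv> -\<omega>\<close> modulo \<open>2\<pi>/\<Delta>\<close>.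
  For \<open>|\<omega>| < 1\<close> take \<open>w = -\<omega>\<close>: then \<open>|hD1| \<le> \<Delta>\<close>, and with \<open>|hD2| \<le> \<Delta>\<close>, \<open>|hD3| \<le> \<lfloor>t/\<Delta>\<rfloor>\<close> the
  cross term is at most \<open>2t\<^sup>2\<close>. For \<open>|\<omega>| \<ge> 1\<close> take the folded frequency, \<open>|w\<Delta>| \<le> \<pi>\<close>: as
  \<open>g(x)\<close> is comparable to \<open>(1+|x|)^(q-p)\<close>, \<open>|hD1| \<le> \<Delta> K (1+|w|)/(1+|\<omega>|)\<close>, while
  \<open>|hD3| (1+|w|) \<le> (t+6)/\<Delta>\<close> and \<open>|hD2 hD3| \<le> 2/|\<omega>|\<close>; this gives \<open>C/\<omega>\<^sup>2\<close>.\<close>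

lemma norm_exp_i_minus_one: "cmod (exp (\<i> * of_real x) - 1) = 2 * \<bar>sin (x/2)\<bar>"
proof -
  have "(cmod (exp (\<i> * of_real x) - 1))^2 = (cos x - 1)^2 + (sin x)^2"
    by (simp add: exp_Euler cmod_def cos_of_real sin_of_real)
  also have "\<dots> = 2 - 2 * cos x"
    using sin_cos_squared_add[of x] by (simp add: power2_eq_square algebra_simps)
  also have "cos x = 1 - 2 * sin (x/2) ^ 2"
    using cos_double_sin[of "x/2"] by simp
  finally have "(cmod (exp (\<i> * of_real x) - 1))^2 = (2 * \<bar>sin (x/2)\<bar>)^2"
    by (simp add: power2_eq_square)
  then show ?thesis by (rule power2_eq_imp_eq) auto
qed

lemma norm_exp_i_minus_one_le: "cmod (exp (\<i> * of_real x) - 1) \<le> \<bar>x\<bar>"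
  using abs_sin_x_le_abs_x[of "x/2"] by (simp add: norm_exp_i_minus_one)

lemma abs_sin_ge_third:
  assumes "\<bar>x\<bar> \<le> pi/2"
  shows "\<bar>x\<bar>/3 \<le> \<bar>sin x\<bar>"
proof -
  have "\<bar>sin x - (\<Sum>m<3. sin_coeff m * x ^ m)\<bar> \<le> inverse (fact 3) * \<bar>x\<bar> ^ 3"
    by (rule Maclaurin_sin_bound)
  moreover have "(\<Sum>m<3. sin_coeff m * x ^ m) = x"
    by (simp add: numeral_3_eq_3 sin_coeff_def)
  moreover have "\<bar>x\<bar>^2 \<le> 4"
  proof -
    have "\<bar>x\<bar>^2 \<le> (pi/2)^2" using assms by (intro power_mono) auto
    also have "\<dots> \<le> 2^2" using pi_less_4 by (intro power_mono) auto
    finally show ?thesis by simp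
  qed
  then have "inverse (fact 3) * \<bar>x\<bar> ^ 3 \<le> \<bar>x\<bar> * (2/3)"
    using mult_left_mono[of "\<bar>x\<bar>^2" 4 "\<bar>x\<bar>"]
    by (simp add: fact_numeral power3_eq_cube power2_eq_square algebra_simps)
  ultimately show ?thesis by linarith
qed

lemma norm_exp_i_minus_one_ge:
  assumes "\<bar>y\<bar> \<le> pi"
  shows "\<bar>y\<bar>/3 \<le> cmod (exp (\<i> * of_real y) - 1)"
  using abs_sin_ge_third[of "y/2"] assms by (simp add: norm_exp_i_minus_one)

lemma reduce_angle:
  fixes x :: real
  obtains k :: int where "\<bar>x - 2 * pi * k\<bar> \<le> pi" "\<bar>x - 2 * pi * k\<bar> \<le> \<bar>x\<bar>"
proof
  define u where "u = x / (2 * pi)"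
  have "x - 2 * pi * v = 2 * pi * (u - v)" for v
    by (simp add: u_def field_simps)
  then have x: "\<bar>x - 2 * pi * v\<bar> = 2 * pi * \<bar>u - v\<bar>" for v
    by (simp add: abs_mult)
  show "\<bar>x - 2 * pi * round u\<bar> \<le> pi"
    using of_int_round_abs_le[of u] by (simp add: x abs_minus_commute)
  show "\<bar>x - 2 * pi * round u\<bar> \<le> \<bar>x\<bar>"
    using round_diff_minimal[of u 0] x[of 0] by (simp add: x)
qed

lemma exp_i_mult_of_nat:
  "exp (\<i> * of_real \<omega> * of_real \<Delta> * of_nat n) = exp (\<i> * of_real \<omega> * of_real \<Delta>) ^ n"
  by (simp add: exp_of_nat_mult[symmetric] mult.commute)

lemma norm_exp_i_mult: "cmod (exp (\<i> * of_real \<omega> * of_real \<Delta>)) = 1"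
  by (metis norm_exp_i_times mult.assoc of_real_mult)

lemma hD3_eq_sum: "hD3 \<Delta> n \<omega> = (\<Sum>k<n. exp (\<i> * of_real \<omega> * of_real \<Delta>) ^ k)"
  by (simp add: hD3_def sum_gp_strict exp_i_mult_of_nat)

lemma norm_hD3_le: "cmod (hD3 \<Delta> n \<omega>) \<le> real n"
proof -
  have "cmod (hD3 \<Delta> n \<omega>) \<le> (\<Sum>k<n. cmod (exp (\<i> * of_real \<omega> * of_real \<Delta>) ^ k))"
    unfolding hD3_eq_sum by (rule norm_sum)
  then show ?thesis by (simp add: norm_power norm_exp_i_mult)
qed

lemma norm_hD3_mul_le:
  assumes "\<bar>y\<bar> \<le> pi" and "exp (\<i> * of_real \<omega> * of_real \<Delta>) = exp (\<i> * of_real y)"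
  shows "cmod (hD3 \<Delta> n \<omega>) * \<bar>y\<bar> \<le> 6"
proof (cases "y = 0")
  case False
  define e where "e = exp (\<i> * of_real \<omega> * of_real \<Delta>)"
  have dist: "\<bar>y\<bar>/3 \<le> cmod (1 - e)"
    using norm_exp_i_minus_one_ge[OF assms(1)] by (simp add: e_def assms(2) norm_minus_commute)
  with False have "e \<noteq> 1" by auto
  then have "cmod (hD3 \<Delta> n \<omega>) = cmod (1 - e^n) / cmod (1 - e)"
    by (simp add: hD3_def e_def exp_i_mult_of_nat norm_divide)
  also have "\<dots> \<le> 2 / (\<bar>y\<bar>/3)"
  proof (rule frac_le)
    show "cmod (1 - e^n) \<le> 2"
      using norm_triangle_ineq4[of 1 "e^n"] by (simp add: norm_power e_def norm_exp_i_mult)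
  qed (use dist False in auto)
  finally show ?thesis using False by (simp add: field_simps)
qed simp

lemma norm_hD2_le: "\<Delta> \<ge> 0 \<Longrightarrow> cmod (hD2 \<Delta> \<omega>) \<le> \<Delta>"
  using norm_exp_i_minus_one_le[of "\<omega> * \<Delta>"]
  by (simp add: hD2_def norm_divide norm_mult abs_mult field_simps mult.assoc)

lemma hD2_mul_hD3:
  assumes "\<omega> \<noteq> 0"
  shows "hD2 \<Delta> \<omega> * hD3 \<Delta> n \<omega> = (exp (\<i> * of_real \<omega> * of_real \<Delta>) ^ n - 1) / (\<i> * of_real \<omega>)"
proof (cases "exp (\<i> * of_real \<omega> * of_real \<Delta>) = 1")
  case False
  define e where "e = exp (\<i> * of_real \<omega> * of_real \<Delta>)"
  have "hD2 \<Delta> \<omega> * hD3 \<Delta> n \<omega> = (e - 1) / (\<i> * of_real \<omega>) * ((1 - e^n) / (1 - e))"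
    using False assms by (simp add: hD2_def hD3_def e_def exp_i_mult_of_nat)
  also have "\<dots> = (e^n - 1) / (\<i> * of_real \<omega>)"
  proof -
    have "1 - e \<noteq> 0" using False by (simp add: e_def)
    then show ?thesis using assms by (simp add: field_simps)
  qed
  finally show ?thesis by (simp add: e_def)
qed (use assms in \<open>simp add: hD2_def\<close>)

lemma norm_hD2_mul_hD3_le:
  assumes "\<omega> \<noteq> 0"
  shows "cmod (hD2 \<Delta> \<omega> * hD3 \<Delta> n \<omega>) \<le> 2 / \<bar>\<omega>\<bar>"
proof -
  have "cmod (exp (\<i> * of_real \<omega> * of_real \<Delta>) ^ n - 1) \<le> 2"
    using norm_triangle_ineq4[of "exp (\<i> * of_real \<omega> * of_real \<Delta>) ^ n" 1]
    by (simp add: norm_power norm_exp_i_mult)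
  then show ?thesis using assms
    by (simp add: hD2_mul_hD3 norm_divide norm_mult divide_right_mono)
qed

definition carma_gain :: "real poly \<Rightarrow> real poly \<Rightarrow> real \<Rightarrow> real" where
  "carma_gain a b \<omega> =
     cmod (poly (map_poly of_real b) (- \<i> * of_real \<omega>))
       / cmod (poly (map_poly of_real a) (- \<i> * of_real \<omega>))"

lemma carma_spec_dens_eq_gain:
  "carma_spec_dens \<sigma> a b \<omega> = \<sigma>^2 / (2*pi) * carma_gain a b \<omega> ^ 2"
  by (simp add: carma_spec_dens_def carma_gain_def power_divide)

lemma carma_gain_nonneg: "carma_gain a b \<omega> \<ge> 0"
  by (simp add: carma_gain_def)

lemma carma_gain_minus: "carma_gain a b (- \<omega>) = carma_gain a b \<omega>"
proof -
  have "cmod (poly (map_poly of_real r) (- \<i> * of_real (- \<omega>)))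
      = cmod (poly (map_poly of_real r) (- \<i> * of_real \<omega>))" for r :: "real poly"
  proof -
    have "cnj (poly (map_poly of_real r) (- \<i> * of_real \<omega>))
        = poly (map_poly of_real r) (- \<i> * of_real (- \<omega>))"
      by (subst poly_cnj_real) (simp_all add: coeff_map_poly)
    then show ?thesis by (metis complex_mod_cnj)
  qed
  then show ?thesis by (simp add: carma_gain_def)
qed

lemma norm_imag_minus_le: "cmod (- \<i> * of_real x - c) \<le> (1 + cmod c) * (1 + \<bar>x\<bar>)"
proof -
  have "cmod (- \<i> * of_real x - c) \<le> \<bar>x\<bar> + cmod c"
    using norm_triangle_ineq4[of "- \<i> * of_real x" c] by (simp add: norm_mult)
  also have "\<dots> \<le> (1 + cmod c) * (1 + \<bar>x\<bar>)"
    by (simp add: algebra_simps)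
  finally show ?thesis .
qed

lemma norm_imag_minus_ge:
  assumes "Re c \<noteq> 0"
  shows "\<bar>Re c\<bar> / (1 + cmod c + \<bar>Re c\<bar>) * (1 + \<bar>x\<bar>) \<le> cmod (- \<i> * of_real x - c)"
proof -
  define d where "d = cmod (- \<i> * of_real x - c)"
  have Re: "\<bar>Re c\<bar> \<le> d"
    using abs_Re_le_cmod[of "- \<i> * of_real x - c"] by (simp add: d_def)
  have "\<bar>x\<bar> - cmod c \<le> d"
    using norm_triangle_ineq2[of "- \<i> * of_real x" c] by (simp add: d_def norm_mult)
  then have "\<bar>Re c\<bar> * (1 + \<bar>x\<bar>) \<le> \<bar>Re c\<bar> * (1 + cmod c) + \<bar>Re c\<bar> * d"
    using mult_left_mono[of "1 + \<bar>x\<bar>" "1 + cmod c + d" "\<bar>Re c\<bar>"] by (simp add: algebra_simps)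
  also have "\<dots> \<le> d * (1 + cmod c + \<bar>Re c\<bar>)"
    using mult_right_mono[OF Re, of "1 + cmod c"] by (simp add: algebra_simps)
  finally show ?thesis
    using assms by (simp add: d_def pos_divide_le_eq add_pos_nonneg mult.commute)
qed

lemma prod_norm_imag_minus_comparable:
  fixes c :: "nat \<Rightarrow> complex"
  assumes "\<forall>i<n. Re (c i) \<noteq> 0"
  obtains lo hi :: real where "lo > 0"
    "\<And>x. lo * (1 + \<bar>x\<bar>)^n \<le> (\<Prod>i<n. cmod (- \<i> * of_real x - c i))"
    "\<And>x. (\<Prod>i<n. cmod (- \<i> * of_real x - c i)) \<le> hi * (1 + \<bar>x\<bar>)^n"
proof
  show "(\<Prod>i<n. \<bar>Re (c i)\<bar> / (1 + cmod (c i) + \<bar>Re (c i)\<bar>)) > 0"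
    using assms by (intro prod_pos) (auto intro!: divide_pos_pos add_pos_nonneg)
  fix x
  have "(\<Prod>i<n. \<bar>Re (c i)\<bar> / (1 + cmod (c i) + \<bar>Re (c i)\<bar>)) * (1 + \<bar>x\<bar>)^n
      = (\<Prod>i<n. \<bar>Re (c i)\<bar> / (1 + cmod (c i) + \<bar>Re (c i)\<bar>) * (1 + \<bar>x\<bar>))"
    by (simp only: prod.distrib prod_constant card_lessThan)
  also have "\<dots> \<le> (\<Prod>i<n. cmod (- \<i> * of_real x - c i))"
    using assms norm_imag_minus_ge by (intro prod_mono) (auto simp del: mult_minus_left)
  finally show "(\<Prod>i<n. \<bar>Re (c i)\<bar> / (1 + cmod (c i) + \<bar>Re (c i)\<bar>)) * (1 + \<bar>x\<bar>)^n
      \<le> (\<Prod>i<n. cmod (- \<i> * of_real x - c i))" .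
  have "(\<Prod>i<n. cmod (- \<i> * of_real x - c i)) \<le> (\<Prod>i<n. (1 + cmod (c i)) * (1 + \<bar>x\<bar>))"
    using norm_imag_minus_le by (intro prod_mono) (auto simp del: mult_minus_left)
  also have "\<dots> = (\<Prod>i<n. 1 + cmod (c i)) * (1 + \<bar>x\<bar>)^n"
    by (simp only: prod.distrib prod_constant card_lessThan)
  finally show "(\<Prod>i<n. cmod (- \<i> * of_real x - c i)) \<le> (\<Prod>i<n. 1 + cmod (c i)) * (1 + \<bar>x\<bar>)^n" .
qed

lemma norm_poly_prod_linear:
  "cmod (poly (\<Prod>i<n. [:- c i, 1:]) z) = (\<Prod>i<n. cmod (z - c i))"
  by (simp add: poly_prod prod_norm[symmetric])

lemma quotient_of_comparable_powers:
  fixes X N D :: real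
  assumes "X > 0" and "loN > 0" and "loD > 0" and "q \<le> p"
    and N: "loN * X^q \<le> N" "N \<le> hiN * X^q" and D: "loD * X^p \<le> D" "D \<le> hiD * X^p"
  shows "loN / hiD \<le> N / D * X^(p - q)" and "N / D * X^(p - q) \<le> hiN / loD"
proof -
  have split: "X^p = X^q * X^(p - q)"
    using assms(4) by (simp flip: power_add)
  have "0 < loD * X^p" using assms(1,3) by simp
  then have "D > 0" using D(1) by linarith
  then have "0 < hiD * X^p" using D(2) by linarith
  then have "hiD > 0" by (rule zero_less_mult_pos2) (use assms(1) in simp)
  have "0 < loN * X^q" using assms(1,2) by simp
  then have "N > 0" using N(1) by linarith
  then have "0 < hiN * X^q" using N(2) by linarith
  then have "hiN > 0" by (rule zero_less_mult_pos2) (use assms(1) in simp)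
  have "loN / hiD = loN * X^p / (hiD * X^p)"
    using assms(1) by simp
  also have "\<dots> \<le> N * X^(p - q) / D"
    using mult_right_mono[OF N(1), of "X^(p - q)"] assms(1) \<open>D > 0\<close> \<open>N > 0\<close> D(2)
    by (intro frac_le) (simp_all add: split mult.assoc)
  finally show "loN / hiD \<le> N / D * X^(p - q)" by simp
  have "N * X^(p - q) / D \<le> hiN * X^p / (loD * X^p)"
    using mult_right_mono[OF N(2), of "X^(p - q)"] assms(1,3) \<open>hiN > 0\<close> D(1)
    by (intro frac_le) (simp_all add: split mult.assoc)
  also have "\<dots> = hiN / loD"
    using assms(1) by simp
  finally show "N / D * X^(p - q) \<le> hiN / loD" by simp
qed

lemma carma_gain_comparable:
  assumes "map_poly of_real a = (\<Prod>i<p. [:- lam i, 1:])"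
    and "map_poly of_real b = (\<Prod>k<q. [:mu k, 1:])"
    and "\<forall>i<p. Re (lam i) \<noteq> 0" and "\<forall>k<q. Re (mu k) \<noteq> 0" and "q \<le> p"
  obtains lo hi where "lo > 0"
    "\<And>x. lo \<le> carma_gain a b x * (1 + \<bar>x\<bar>)^(p - q)"
    "\<And>x. carma_gain a b x * (1 + \<bar>x\<bar>)^(p - q) \<le> hi"
proof -
  have "\<forall>k<q. Re (- mu k) \<noteq> 0" using assms(4) by simp
  then obtain loN hiN where "loN > 0"
    and N: "\<And>x. loN * (1 + \<bar>x\<bar>)^q \<le> (\<Prod>k<q. cmod (- \<i> * of_real x - - mu k))"
           "\<And>x. (\<Prod>k<q. cmod (- \<i> * of_real x - - mu k)) \<le> hiN * (1 + \<bar>x\<bar>)^q"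
    using prod_norm_imag_minus_comparable[where c="\<lambda>k. - mu k" and n=q] by blast
  obtain loD hiD where "loD > 0"
    and D: "\<And>x. loD * (1 + \<bar>x\<bar>)^p \<le> (\<Prod>i<p. cmod (- \<i> * of_real x - lam i))"
           "\<And>x. (\<Prod>i<p. cmod (- \<i> * of_real x - lam i)) \<le> hiD * (1 + \<bar>x\<bar>)^p"
    using prod_norm_imag_minus_comparable[OF assms(3)] by blast
  have gain: "carma_gain a b x
      = (\<Prod>k<q. cmod (- \<i> * of_real x - - mu k)) / (\<Prod>i<p. cmod (- \<i> * of_real x - lam i))" for x
    using norm_poly_prod_linear[of "\<lambda>k. - mu k" q] norm_poly_prod_linear[of lam p]
    by (simp add: carma_gain_def assms(1,2))
  note bounds = quotient_of_comparable_powers[OF _ \<open>loN > 0\<close> \<open>loD > 0\<close> assms(5) N D]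
  have "loD \<le> hiD" using D[of 0] by simp
  then show ?thesis
    using bounds \<open>loN > 0\<close> \<open>loD > 0\<close>
    by (intro that[of "loN / hiD" "hiN / loD"]) (simp_all add: gain)
qed

lemma decay_of_comparable:
  fixes g :: "real \<Rightarrow> real"
  assumes "lo > 0" and lower: "\<And>x. lo \<le> g x * (1 + \<bar>x\<bar>)^m"
    and upper: "\<And>x. g x * (1 + \<bar>x\<bar>)^m \<le> hi" and "m \<ge> 1" and "\<bar>y\<bar> \<le> \<bar>x\<bar>"
  shows "g x \<le> hi / lo * g y * ((1 + \<bar>y\<bar>) / (1 + \<bar>x\<bar>))"
proof -
  define X Y where "X = 1 + \<bar>x\<bar>" and "Y = 1 + \<bar>y\<bar>"
  have XY: "0 < Y" "Y \<le> X" using assms(5) by (simp_all add: X_def Y_def)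
  have "lo \<le> hi" using lower[of 0] upper[of 0] by simp
  have "g x \<le> hi / X^m"
    using upper[of x] XY by (simp add: X_def pos_le_divide_eq)
  also have "\<dots> = hi / lo * (lo / Y^m) * (Y / X)^m"
    using assms(1) XY by (simp add: power_divide)
  also have "\<dots> \<le> hi / lo * g y * (Y / X)^m"
    using lower[of y] assms(1) \<open>lo \<le> hi\<close> XY
    by (intro mult_right_mono mult_left_mono) (simp_all add: Y_def pos_divide_le_eq)
  also have "\<dots> \<le> hi / lo * g y * (Y / X)"
  proof (rule mult_left_mono)
    show "(Y / X)^m \<le> Y / X"
      using power_decreasing[of 1 m "Y / X"] assms(4) XY by simp
    have "0 < g y * Y^m" using lower[of y] assms(1) by (simp add: Y_def)
    then show "0 \<le> hi / lo * g y"
      using assms(1) \<open>lo \<le> hi\<close> XY by (simp add: zero_less_mult_iff)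
  qed
  finally show ?thesis by (simp add: X_def Y_def)
qed

lemma carma_spec_dens_le_sampled:
  assumes "\<Delta> > 0" and "sampled_spec_dens \<sigma> a b \<Delta> \<theta> \<noteq> 0"
  shows "carma_spec_dens \<sigma> a b ((\<theta> + 2 * pi * of_int k) / \<Delta>) \<le> \<Delta> * sampled_spec_dens \<sigma> a b \<Delta> \<theta>"
proof -
  define F where "F = (\<lambda>k::int. carma_spec_dens \<sigma> a b ((\<theta> + 2 * pi * of_int k) / \<Delta>))"
  have "F summable_on UNIV"
    using assms(2) infsum_not_exists by (force simp: sampled_spec_dens_def F_def)
  then have "infsum F {k} \<le> infsum F UNIV"
    by (intro infsum_mono_neutral) (auto simp: F_def carma_spec_dens_def)
  then show ?thesis
    using assms(1) by (simp add: sampled_spec_dens_def F_def)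
qed

lemma poly_Phi_poly_exp:
  "poly (Phi_poly lam p \<Delta>) (exp (\<i> * of_real \<omega> * of_real \<Delta>))
     = (\<Prod>j<p. 1 - exp (of_real \<Delta> * (lam j + \<i> * of_real \<omega>)))"
  unfolding Phi_poly_def poly_prod
  by (intro prod.cong refl) (simp add: exp_add[symmetric] algebra_simps)

lemma norm_hD1:
  assumes "\<sigma> > 0" and "\<Delta> > 0" and "sD > 0"
  shows "cmod (hD1 \<sigma> a b lam p \<Delta> \<Theta> sD \<omega>)
    = \<sigma> * sqrt \<Delta> / sD * cmod (poly (Phi_poly lam p \<Delta>) (exp (\<i> * of_real \<omega> * of_real \<Delta>)))
      / cmod (poly \<Theta> (exp (\<i> * of_real \<omega> * of_real \<Delta>))) * carma_gain a b \<omega>"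
  using assms by (simp add: hD1_def poly_Phi_poly_exp carma_gain_def norm_mult norm_divide)

lemma norm_hD1_mul_alias_gain_le:
  assumes "\<sigma> > 0" and "\<Delta> > 0" and mpf: "min_phase_factor \<sigma> a b lam p \<Delta> \<Theta> sD"
  shows "cmod (hD1 \<sigma> a b lam p \<Delta> \<Theta> sD \<omega>) * carma_gain a b ((2 * pi * of_int k - \<omega> * \<Delta>) / \<Delta>)
    \<le> \<Delta> * carma_gain a b \<omega>"
proof -
  define z where "z = exp (\<i> * of_real \<omega> * of_real \<Delta>)"
  define cP where "cP = cmod (poly (Phi_poly lam p \<Delta>) z)"
  define cT where "cT = cmod (poly \<Theta> z)"
  define gw where "gw = carma_gain a b ((2 * pi * of_int k - \<omega> * \<Delta>) / \<Delta>)"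
  have sD: "sD > 0" using mpf by (simp add: min_phase_factor_def)
  have "exp (- \<i> * of_real (- (\<omega> * \<Delta>))) = z"
    by (simp add: z_def mult.assoc)
  then have spec: "sD^2 / (2*pi) * cT^2 / cP^2 = sampled_spec_dens \<sigma> a b \<Delta> (- (\<omega> * \<Delta>))"
    using mpf unfolding min_phase_factor_def cT_def cP_def by metis
  have hD1: "cmod (hD1 \<sigma> a b lam p \<Delta> \<Theta> sD \<omega>) = \<sigma> * sqrt \<Delta> / sD * cP / cT * carma_gain a b \<omega>"
    using norm_hD1[OF assms(1,2) sD] by (simp add: cP_def cT_def z_def)
  show ?thesis
  proof (cases "cP = 0 \<or> cT = 0")
    case True
    then show ?thesis
      using assms(2) by (auto simp: hD1 carma_gain_nonneg)
  next
    case False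
    then have cP: "cP > 0" and cT: "cT > 0" by (auto simp: cP_def cT_def)
    have "carma_spec_dens \<sigma> a b ((- (\<omega> * \<Delta>) + 2 * pi * of_int k) / \<Delta>)
        \<le> \<Delta> * sampled_spec_dens \<sigma> a b \<Delta> (- (\<omega> * \<Delta>))"
      by (rule carma_spec_dens_le_sampled) (use assms(2) sD cP cT in \<open>simp_all flip: spec\<close>)
    then have "\<sigma>^2 / (2*pi) * gw^2 \<le> \<Delta> * (sD^2 / (2*pi) * cT^2 / cP^2)"
      unfolding spec by (simp add: gw_def carma_spec_dens_eq_gain)
    then have "(\<sigma> * gw * cP)^2 \<le> (sD * sqrt \<Delta> * cT)^2"
      using assms(2) cP by (simp add: field_simps power_mult_distrib)
    then have key: "\<sigma> * gw * cP \<le> sD * sqrt \<Delta> * cT"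
      by (rule power2_le_imp_le) (use sD assms(2) cT in auto)
    have "cmod (hD1 \<sigma> a b lam p \<Delta> \<Theta> sD \<omega>) * gw
        = sqrt \<Delta> / (sD * cT) * (\<sigma> * gw * cP) * carma_gain a b \<omega>"
      using sD cT by (simp add: hD1 field_simps)
    also have "\<dots> \<le> sqrt \<Delta> / (sD * cT) * (sD * sqrt \<Delta> * cT) * carma_gain a b \<omega>"
      using key sD cT assms(2) carma_gain_nonneg by (intro mult_right_mono mult_left_mono) auto
    also have "\<dots> = \<Delta> * carma_gain a b \<omega>"
      using sD cT assms(2) by simp
    finally show ?thesis by (simp add: gw_def)
  qed
qed

lemma norm_hD1_le:
  assumes "\<sigma> > 0" and "\<Delta> > 0" and "min_phase_factor \<sigma> a b lam p \<Delta> \<Theta> sD"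
    and "carma_gain a b \<omega> > 0"
  shows "cmod (hD1 \<sigma> a b lam p \<Delta> \<Theta> sD \<omega>) \<le> \<Delta>"
  using norm_hD1_mul_alias_gain_le[OF assms(1-3), of \<omega> 0] assms(2,4)
  by (simp add: carma_gain_minus)

lemma norm_hD1_mul_hD3_le:
  assumes "\<sigma> > 0" and "\<Delta> > 0" and "min_phase_factor \<sigma> a b lam p \<Delta> \<Theta> sD"
    and gain_pos: "\<And>x. carma_gain a b x > 0"
    and decay: "\<And>x y. \<bar>y\<bar> \<le> \<bar>x\<bar> \<Longrightarrow>
      carma_gain a b x \<le> K * carma_gain a b y * ((1 + \<bar>y\<bar>) / (1 + \<bar>x\<bar>))"
    and "K \<ge> 0" and "real n * \<Delta> \<le> t"
  shows "cmod (hD1 \<sigma> a b lam p \<Delta> \<Theta> sD \<omega>) * cmod (hD3 \<Delta> n \<omega>) \<le> K * (t + 6) / (1 + \<bar>\<omega>\<bar>)"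
proof -
  obtain k :: int where k: "\<bar>\<omega> * \<Delta> - 2 * pi * k\<bar> \<le> pi" "\<bar>\<omega> * \<Delta> - 2 * pi * k\<bar> \<le> \<bar>\<omega> * \<Delta>\<bar>"
    by (rule reduce_angle)
  define y where "y = \<omega> * \<Delta> - 2 * pi * k"
  define w where "w = (2 * pi * k - \<omega> * \<Delta>) / \<Delta>"
  have w: "\<bar>w\<bar> = \<bar>y\<bar> / \<Delta>"
    using assms(2) by (simp add: w_def y_def abs_minus_commute)
  have "\<bar>w\<bar> \<le> \<bar>\<omega>\<bar>"
    using k(2) assms(2) by (simp add: w y_def abs_mult divide_le_eq)
  have h1: "cmod (hD1 \<sigma> a b lam p \<Delta> \<Theta> sD \<omega>) \<le> \<Delta> * K * ((1 + \<bar>w\<bar>) / (1 + \<bar>\<omega>\<bar>))"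
  proof -
    have "cmod (hD1 \<sigma> a b lam p \<Delta> \<Theta> sD \<omega>) * carma_gain a b w \<le> \<Delta> * carma_gain a b \<omega>"
      unfolding w_def by (rule norm_hD1_mul_alias_gain_le[OF assms(1-3)])
    also have "\<dots> \<le> \<Delta> * K * ((1 + \<bar>w\<bar>) / (1 + \<bar>\<omega>\<bar>)) * carma_gain a b w"
      using mult_left_mono[OF decay[OF \<open>\<bar>w\<bar> \<le> \<bar>\<omega>\<bar>\<close>], of \<Delta>] assms(2) by (simp add: mult_ac)
    finally show ?thesis
      using gain_pos[of w] by (rule mult_right_le_imp_le)
  qed
  have "exp (\<i> * of_real \<omega> * of_real \<Delta>) = exp (\<i> * of_real y + \<i> * (of_int k * (of_real pi * 2)))"
    by (simp add: y_def algebra_simps)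
  then have "cmod (hD3 \<Delta> n \<omega>) * \<bar>y\<bar> \<le> 6"
    using k(1) by (intro norm_hD3_mul_le) (simp_all add: y_def)
  moreover have "\<Delta> * cmod (hD3 \<Delta> n \<omega>) \<le> t"
    using norm_hD3_le[of \<Delta> n \<omega>] assms(2,7) by (smt (verit) mult.commute mult_left_mono)
  ultimately have "(\<Delta> * cmod (hD3 \<Delta> n \<omega>) + cmod (hD3 \<Delta> n \<omega>) * \<bar>y\<bar>) / \<Delta> \<le> (t + 6) / \<Delta>"
    using assms(2) by (intro divide_right_mono) auto
  then have h3: "cmod (hD3 \<Delta> n \<omega>) * (1 + \<bar>w\<bar>) \<le> (t + 6) / \<Delta>"
    using assms(2) by (simp add: w add_divide_distrib algebra_simps)
  have "cmod (hD1 \<sigma> a b lam p \<Delta> \<Theta> sD \<omega>) * cmod (hD3 \<Delta> n \<omega>)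
      \<le> \<Delta> * K / (1 + \<bar>\<omega>\<bar>) * (cmod (hD3 \<Delta> n \<omega>) * (1 + \<bar>w\<bar>))"
    using mult_right_mono[OF h1 norm_ge_zero[of "hD3 \<Delta> n \<omega>"]] by (simp add: mult_ac)
  also have "\<dots> \<le> \<Delta> * K / (1 + \<bar>\<omega>\<bar>) * ((t + 6) / \<Delta>)"
    using h3 assms(2,6) by (intro mult_left_mono) auto
  also have "\<dots> = K * (t + 6) / (1 + \<bar>\<omega>\<bar>)"
    using assms(2) by simp
  finally show ?thesis .
qed

lemma one_le_carma_bound_const:
  assumes "q < p"
  shows "(1::real) \<le> 7^(2*p) / 2^(2*p+q)"
proof -
  have "(2::real)^(2*p+q) \<le> 2^(3*p)"
    using assms by (intro power_increasing) auto
  also have "\<dots> = 8^p" by (simp add: power_mult)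
  also have "\<dots> \<le> 49^p" by (intro power_mono) auto
  also have "\<dots> = 7^(2*p)" by (simp add: power_mult)
  finally show ?thesis by simp
qed

lemma cross_term_le_carma_bound:
  assumes "q < p" and "\<sigma> > 0" and "t > 0" and "\<Delta> > 0"
    and mpf: "min_phase_factor \<sigma> a b lam p \<Delta> \<Theta> sD"
    and gain_pos: "\<And>x. carma_gain a b x > 0"
    and decay: "\<And>x y. \<bar>y\<bar> \<le> \<bar>x\<bar> \<Longrightarrow>
      carma_gain a b x \<le> K * carma_gain a b y * ((1 + \<bar>y\<bar>) / (1 + \<bar>x\<bar>))"
    and "K > 0"
  shows "\<bar>2 * Re (hD1 \<sigma> a b lam p \<Delta> \<Theta> sD \<omega> * hD3 \<Delta> (nat \<lfloor>t/\<Delta>\<rfloor>) \<omega>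
               * cnj (hD2 \<Delta> \<omega> * hD3 \<Delta> (nat \<lfloor>t/\<Delta>\<rfloor>) \<omega>))\<bar>
    \<le> carma_bound p q t (4 * K * (t + 6)) \<omega>"
proof -
  define n where "n = nat \<lfloor>t/\<Delta>\<rfloor>"
  define h1 h2 h3 where "h1 = hD1 \<sigma> a b lam p \<Delta> \<Theta> sD \<omega>" and "h2 = hD2 \<Delta> \<omega>" and "h3 = hD3 \<Delta> n \<omega>"
  have "real n \<le> t / \<Delta>"
    using assms(3,4) by (simp add: n_def)
  then have nt: "real n * \<Delta> \<le> t"
    using assms(4) by (simp add: le_divide_eq)
  have "\<bar>2 * Re (h1 * h3 * cnj (h2 * h3))\<bar> \<le> 2 * (cmod h1 * cmod h3) * cmod (h2 * h3)"
    using abs_Re_le_cmod[of "h1 * h3 * cnj (h2 * h3)"] by (simp add: norm_mult abs_mult)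
  also have "\<dots> \<le> carma_bound p q t (4 * K * (t + 6)) \<omega>"
  proof (cases "\<bar>\<omega>\<bar> < 1")
    case True
    have "cmod h1 * cmod h3 \<le> \<Delta> * real n"
      unfolding h1_def h3_def using norm_hD1_le[OF assms(2,4) mpf gain_pos] norm_hD3_le assms(4)
      by (intro mult_mono) auto
    moreover have "cmod (h2 * h3) \<le> \<Delta> * real n"
      unfolding h2_def h3_def norm_mult using norm_hD2_le norm_hD3_le assms(4)
      by (intro mult_mono) auto
    ultimately have "2 * (cmod h1 * cmod h3) * cmod (h2 * h3) \<le> 2 * (\<Delta> * real n) * (\<Delta> * real n)"
      by (simp add: mult_mono')
    also have "\<dots> \<le> 2 * t * t"
      using nt assms(3,4) by (intro mult_mono) (auto simp: mult.commute)
    also have "\<dots> \<le> (7^(2*p) / 2^(2*p+q) + 1) * t^2"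
      using one_le_carma_bound_const[OF assms(1)]
      by (simp add: power2_eq_square mult_right_mono mult.assoc)
    finally show ?thesis
      using True by (simp add: carma_bound_def abs_less_iff)
  next
    case False
    have "cmod h1 * cmod h3 \<le> K * (t + 6) / (1 + \<bar>\<omega>\<bar>)"
      unfolding h1_def h3_def
      by (rule norm_hD1_mul_hD3_le[OF assms(2,4) mpf gain_pos decay]) (use assms(8) nt in auto)
    also have "\<dots> \<le> K * (t + 6) / \<bar>\<omega>\<bar>"
      using False assms(3,8) by (intro divide_left_mono) auto
    finally have "2 * (cmod h1 * cmod h3) * cmod (h2 * h3) \<le> 2 * (K * (t + 6) / \<bar>\<omega>\<bar>) * (2 / \<bar>\<omega>\<bar>)"
      using norm_hD2_mul_hD3_le[of \<omega> \<Delta> n] False assms(3,8) unfolding h2_def h3_def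
      by (intro mult_mono) auto
    also have "\<dots> = 4 * K * (t + 6) / \<omega>^2"
      by (simp add: power2_eq_square)
    also have "\<dots> = carma_bound p q t (4 * K * (t + 6)) \<omega>"
      using False by (auto simp: carma_bound_def indicator_def power_int_minus divide_inverse)
    finally show ?thesis .
  qed
  finally show ?thesis by (simp add: h1_def h2_def h3_def n_def)
qed

lemma integrable_inverse_square_at_top:
  "integrable lborel (\<lambda>x::real. indicator {1..} x * (1 / x^2))"
proof -
  have "((\<lambda>x::real. 1 / x^2) has_integral 1) {1..}"
    using has_integral_inverse_power_to_inf[of 2 1] by simp
  then have "(\<lambda>x::real. 1 / x^2) integrable_on {1..}"
    by blast
  then have "(\<lambda>x::real. if x \<in> {1..} then 1 / x^2 else 0) integrable_on UNIV"
    by (simp only: integrable_restrict_UNIV)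
  also have "(\<lambda>x::real. if x \<in> {1..} then 1 / x^2 else 0) = (\<lambda>x. indicator {1..} x * (1 / x^2))"
    by (auto simp: indicator_def)
  finally have "(\<lambda>x::real. indicator {1..} x * (1 / x^2)) integrable_on UNIV" .
  then have "(\<lambda>x::real. indicator {1..} x * (1 / x^2)) absolutely_integrable_on UNIV"
    by (rule nonnegative_absolutely_integrable_1) auto
  then show ?thesis
    by (simp add: set_integrable_def integrable_completion[symmetric])
qed

lemma integrable_carma_bound: "integrable lborel (carma_bound p q t C)"
proof -
  have pos: "integrable lborel (\<lambda>x::real. indicator {1..} x * (1 / x^2))"
    by (rule integrable_inverse_square_at_top)
  then have "integrable lborel (\<lambda>x::real. indicator {1..} (- x) * (1 / (- x)^2))"
    using lborel_integrable_real_affine_iff[of "-1" "\<lambda>x. indicator {1..} x * (1 / x^2)" 0] by simp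
  with pos have "integrable lborel
      (\<lambda>x::real. indicator {1..} x * (1 / x^2) + indicator {1..} (- x) * (1 / (- x)^2))"
    by (rule Bochner_Integration.integrable_add)
  also have "(\<lambda>x::real. indicator {1..} x * (1 / x^2) + indicator {1..} (- x) * (1 / (- x)^2))
      = (\<lambda>x. x powi (-2) * indicator (- {-1<..<1}) x)"
    by (auto simp: fun_eq_iff indicator_def power_int_minus field_simps)
  finally have "integrable lborel (\<lambda>x::real. x powi (-2) * indicator (- {-1<..<1}) x)" .
  then show ?thesis
    unfolding carma_bound_def
    by (intro Bochner_Integration.integrable_add integrable_mult_right integrable_real_indicator)
       (simp_all add: mult.assoc)
qed

theorem lemmaA3:
  fixes p q :: nat and \<sigma> t :: real and a b :: "real poly"
    and lam mu :: "nat \<Rightarrow> complex"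
    and Theta :: "real \<Rightarrow> complex poly" and sigD :: "real \<Rightarrow> real"
  assumes "q < p" and "\<sigma> > 0" and "t > 0"
    and "map_poly of_real a = (\<Prod>i<p. [:- lam i, 1:])"
    and "map_poly of_real b = (\<Prod>k<q. [:mu k, 1:])"
    and "\<forall>i<p. \<forall>k<q. lam i \<noteq> - mu k"
    and "\<forall>i<p. Re (lam i) < 0"
    and "\<forall>k<q. Re (mu k) \<noteq> 0"
    and "\<forall>\<Delta>>0. min_phase_factor \<sigma> a b lam p \<Delta> (Theta \<Delta>) (sigD \<Delta>)"
  shows "\<exists>C>0.
    (\<exists>\<delta>>0. \<forall>\<Delta>. 0 < \<Delta> \<and> \<Delta> < \<delta> \<longrightarrow> (\<forall>\<omega>::real.
       \<bar>2 * Re (hD1 \<sigma> a b lam p \<Delta> (Theta \<Delta>) (sigD \<Delta>) \<omega> * hD3 \<Delta> (nat \<lfloor>t/\<Delta>\<rfloor>) \<omega>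
               * cnj (hD2 \<Delta> \<omega> * hD3 \<Delta> (nat \<lfloor>t/\<Delta>\<rfloor>) \<omega>))\<bar>
       \<le> carma_bound p q t C \<omega>))
    \<and> integrable lborel (carma_bound p q t C)"
proof -
  have "\<forall>i<p. Re (lam i) \<noteq> 0"
    using assms(7) by force
  then obtain lo hi where "lo > 0"
    and lower: "\<And>x. lo \<le> carma_gain a b x * (1 + \<bar>x\<bar>)^(p - q)"
    and upper: "\<And>x. carma_gain a b x * (1 + \<bar>x\<bar>)^(p - q) \<le> hi"
    using carma_gain_comparable[OF assms(4,5) _ assms(8)] assms(1) by (metis less_imp_le)
  have gain_pos: "carma_gain a b x > 0" for x
  proof -
    have "0 < carma_gain a b x * (1 + \<bar>x\<bar>)^(p - q)"
      using lower[of x] \<open>lo > 0\<close> by linarith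
    then show ?thesis
      by (simp add: zero_less_mult_iff) linarith
  qed
  define K where "K = hi / lo"
  have "K > 0"
    using \<open>lo > 0\<close> lower[of 0] upper[of 0] by (simp add: K_def)
  have decay: "carma_gain a b x \<le> K * carma_gain a b y * ((1 + \<bar>y\<bar>) / (1 + \<bar>x\<bar>))"
    if "\<bar>y\<bar> \<le> \<bar>x\<bar>" for x y
    using decay_of_comparable[OF \<open>lo > 0\<close> lower upper _ that] assms(1) by (simp add: K_def)
  have "\<bar>2 * Re (hD1 \<sigma> a b lam p \<Delta> (Theta \<Delta>) (sigD \<Delta>) \<omega> * hD3 \<Delta> (nat \<lfloor>t/\<Delta>\<rfloor>) \<omega>
               * cnj (hD2 \<Delta> \<omega> * hD3 \<Delta> (nat \<lfloor>t/\<Delta>\<rfloor>) \<omega>))\<bar>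
       \<le> carma_bound p q t (4 * K * (t + 6)) \<omega>" if "\<Delta> > 0" for \<Delta> \<omega>
    using cross_term_le_carma_bound[OF assms(1-3) that _ gain_pos decay \<open>K > 0\<close>] assms(9) that
    by blast
  \<comment> \<open>The estimate holds for every \<open>\<Delta> > 0\<close>, so any \<open>\<delta>\<close> will do.\<close>
  then show ?thesis
    using integrable_carma_bound \<open>K > 0\<close> assms(3)
    by (intro exI[of _ "4 * K * (t + 6)"] conjI exI[of _ 1]) auto
qed

end
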